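(* Let $\mathcal{A}$ be a complex unital structurable algebra of type $(1,2)$. Then $\mathcal{A}$ is isomorphic (as an algebra with involution) to the universal unital algebra ${\rm S}_1$ of type $(1,2)$, or to the algebra ${\rm S}_2$ with basis $\{e_1,e_2,e_3\}$, unit $e_1$, involution $\overline{e_1}=e_1$, $\overline{e_2}=-e_2$, $\overline{e_3}=-e_3$, and multiplication (besides $e_1e_i=e_ie_1=e_i$; all unlisted products of basis elements zero) $e_2e_3=e_2$, $e_3e_2=-e_2$, $e_3e_3=e_1$.
   Context: An involution on an algebra $\mathcal{A}$ is a linear map $x\mapsto\overline{x}$ with $\overline{\overline{x}}=x$ and $\overline{xy}=\overline{y}\,\overline{x}$. For a unital algebra with involution write $\mathcal{A}=\mathcal{H}\oplus\mathcal{S}$ with $\mathcal{H}=\{a:\overline a=a\}$, $\mathcal{S}=\{a:\overline a=-a\}$; $\mathcal{A}$ is of type $(k,n-k)$ if $\dim\mathcal{A}=n$ and $\dim\mathcal{H}=k$. For $x,y\in\mathcal{A}$ define $V_{x,y}(z)=(x\overline{y})z+(z\overline{y})x-(z\overline{x})y$ and $T_x(z)=xz+zx-z\overline{x}$. A unital algebra with involution is structurable if $T_zV_{x,y}-V_{x,y}T_z=V_{T_z(x),y}-V_{x,T_{\overline z}(y)}$ for all $x,y,z$. An isomorphism of algebras with involution is a linear bijection $\varphi$ with $\varphi(xy)=\varphi(x)\varphi(y)$ and $\varphi(\overline x)=\overline{\varphi(x)}$. The universal unital algebra of type $(1,2)$ is the $3$-dimensional algebra with basis $e_1,e_2,e_3$,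 whose only nonzero products of basis elements are $e_1e_i=e_ie_1=e_i$, with involution $\overline{e_1}=e_1$, $\overline{e_2}=-e_2$, $\overline{e_3}=-e_3$. *)

theory Defs
  imports "HOL-Analysis.Analysis"
begin

definition complex_algebra :: "(complex \<Rightarrow> 'a::ab_group_add \<Rightarrow> 'a) \<Rightarrow> ('a \<Rightarrow> 'a \<Rightarrow> 'a) \<Rightarrow> bool" where
  "complex_algebra sc m \<longleftrightarrow> vector_space sc \<and>
     (\<forall>x. Vector_Spaces.linear sc sc (m x)) \<and> (\<forall>y. Vector_Spaces.linear sc sc (\<lambda>x. m x y))"

definition is_involution :: "(complex \<Rightarrow> 'a::ab_group_add \<Rightarrow> 'a) \<Rightarrow> ('a \<Rightarrow> 'a \<Rightarrow> 'a) \<Rightarrow> ('a \<Rightarrow> 'a) \<Rightarrow> bool" where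
  "is_involution sc m iv \<longleftrightarrow> Vector_Spaces.linear sc sc iv \<and>
     (\<forall>x. iv (iv x) = x) \<and> (\<forall>x y. iv (m x y) = m (iv y) (iv x))"

definition is_unital :: "('a \<Rightarrow> 'a \<Rightarrow> 'a) \<Rightarrow> bool" where
  "is_unital m \<longleftrightarrow> (\<exists>e. \<forall>x. m e x = x \<and> m x e = x)"

text \<open>Type (k, n-k): dim A = n and dim H = k, H the hermitian (symmetric) elements.\<close>
definition of_type :: "(complex \<Rightarrow> 'a::ab_group_add \<Rightarrow> 'a) \<Rightarrow> ('a \<Rightarrow> 'a) \<Rightarrow> nat \<Rightarrow> nat \<Rightarrow> bool" where
  "of_type sc iv k l \<longleftrightarrow> vector_space.dim sc (UNIV :: 'a set) = k + l \<and>
     vector_space.dim sc {a. iv a = a} = k"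

definition Vop :: "('a::ab_group_add \<Rightarrow> 'a \<Rightarrow> 'a) \<Rightarrow> ('a \<Rightarrow> 'a) \<Rightarrow> 'a \<Rightarrow> 'a \<Rightarrow> 'a \<Rightarrow> 'a" where
  "Vop m iv x y z = m (m x (iv y)) z + m (m z (iv y)) x - m (m z (iv x)) y"

definition Top :: "('a::ab_group_add \<Rightarrow> 'a \<Rightarrow> 'a) \<Rightarrow> ('a \<Rightarrow> 'a) \<Rightarrow> 'a \<Rightarrow> 'a \<Rightarrow> 'a" where
  "Top m iv x z = m x z + m z x - m z (iv x)"

definition structurable :: "(complex \<Rightarrow> 'a::ab_group_add \<Rightarrow> 'a) \<Rightarrow> ('a \<Rightarrow> 'a \<Rightarrow> 'a) \<Rightarrow> ('a \<Rightarrow> 'a) \<Rightarrow> bool" where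
  "structurable sc m iv \<longleftrightarrow> complex_algebra sc m \<and> is_involution sc m iv \<and> is_unital m \<and>
     (\<forall>x y z w. Top m iv z (Vop m iv x y w) - Vop m iv x y (Top m iv z w)
        = Vop m iv (Top m iv z x) y w - Vop m iv x (Top m iv (iv z) y) w)"

text \<open>The concrete 3-dimensional algebras on complex triples (coordinates w.r.t. e1, e2, e3).\<close>

definition sc3 :: "complex \<Rightarrow> complex \<times> complex \<times> complex \<Rightarrow> complex \<times> complex \<times> complex" where
  "sc3 c v = (case v of (a1, a2, a3) \<Rightarrow> (c * a1, c * a2, c * a3))"

definition invS :: "complex \<times> complex \<times> complex \<Rightarrow> complex \<times> complex \<times> complex" where
  "invS v = (case v of (a1, a2, a3) \<Rightarrow> (a1, - a2, - a3))"

text \<open>S1: only nonzero basis products e1 ei = ei e1 = ei.\<close>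
definition multS1 :: "complex \<times> complex \<times> complex \<Rightarrow> complex \<times> complex \<times> complex \<Rightarrow> complex \<times> complex \<times> complex" where
  "multS1 u v = (case u of (a1, a2, a3) \<Rightarrow> case v of (b1, b2, b3) \<Rightarrow>
      (a1 * b1, a1 * b2 + a2 * b1, a1 * b3 + a3 * b1))"

text \<open>S2: additionally e2 e3 = e2, e3 e2 = - e2, e3 e3 = e1.\<close>
definition multS2 :: "complex \<times> complex \<times> complex \<Rightarrow> complex \<times> complex \<times> complex \<Rightarrow> complex \<times> complex \<times> complex" where
  "multS2 u v = (case u of (a1, a2, a3) \<Rightarrow> case v of (b1, b2, b3) \<Rightarrow>
      (a1 * b1 + a3 * b3, a1 * b2 + a2 * b1 + a2 * b3 - a3 * b2, a1 * b3 + a3 * b1))"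

definition iso_inv_alg ::
  "(complex \<Rightarrow> 'a::ab_group_add \<Rightarrow> 'a) \<Rightarrow> ('a \<Rightarrow> 'a \<Rightarrow> 'a) \<Rightarrow> ('a \<Rightarrow> 'a) \<Rightarrow>
   (complex \<Rightarrow> 'b::ab_group_add \<Rightarrow> 'b) \<Rightarrow> ('b \<Rightarrow> 'b \<Rightarrow> 'b) \<Rightarrow> ('b \<Rightarrow> 'b) \<Rightarrow> ('a \<Rightarrow> 'b) \<Rightarrow> bool" where
  "iso_inv_alg sc m iv sc' m' iv' \<phi> \<longleftrightarrow> Vector_Spaces.linear sc sc' \<phi> \<and> bij \<phi> \<and>
     (\<forall>x y. \<phi> (m x y) = m' (\<phi> x) (\<phi> y)) \<and> (\<forall>x. \<phi> (iv x) = iv' (\<phi> x))"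

end

theory Submission
  imports Defs
begin

text \<open>Let e be the unit. As the symmetric part is the line through e, there are skew s, t
  such that e, s, t is a basis. Then s s and t t are symmetric, hence multiples of e, and
  t s is the image of s t under the involution; so the algebra is determined by five numbers
  a, b, c, p, q with s s = a e, t t = c e, s t = b e + p s + q t. Evaluating the structurable
  identity on basis vectors forces a = q^2, b = - p q, c = p^2. If p = q = 0 this is S1;
  otherwise, for p \<beta> - q \<alpha> = 1, the basis e, p s + q t, \<alpha> s + \<beta> t exhibits S2.\<close>

definition structurable_identity :: "('a::ab_group_add \<Rightarrow> 'a \<Rightarrow> 'a) \<Rightarrow> ('a \<Rightarrow> 'a) \<Rightarrow> bool" where
  "structurable_identity m iv \<longleftrightarrow> (\<forall>x y z w.
     Top m iv z (Vop m iv x y w) - Vop m iv x y (Top m iv z w)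
       = Vop m iv (Top m iv z x) y w - Vop m iv x (Top m iv (iv z) y) w)"

lemma structurable_iff:
  "structurable sc m iv \<longleftrightarrow> complex_algebra sc m \<and> is_involution sc m iv \<and> is_unital m \<and>
     structurable_identity m iv"
  unfolding structurable_def structurable_identity_def ..

lemma iso_inv_alg_comp:
  assumes "iso_inv_alg sc m iv sc' m' iv' \<phi>" and "iso_inv_alg sc' m' iv' sc'' m'' iv'' \<psi>"
  shows "iso_inv_alg sc m iv sc'' m'' iv'' (\<psi> \<circ> \<phi>)"
  using assms unfolding iso_inv_alg_def by (auto intro: Vector_Spaces.linear_compose bij_comp)

lemma iso_inv_alg_inv:
  assumes "iso_inv_alg sc m iv sc' m' iv' \<phi>"
  shows "iso_inv_alg sc' m' iv' sc m iv (inv \<phi>)"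
proof -
  interpret Vector_Spaces.linear sc sc' \<phi> using assms unfolding iso_inv_alg_def by blast
  have bij: "bij \<phi>" using assms unfolding iso_inv_alg_def by blast
  have inv_eq: "inv \<phi> y = x \<longleftrightarrow> y = \<phi> x" for x y
    using bij by (metis bij_inv_eq_iff)
  have \<phi>_inv: "\<phi> (inv \<phi> y) = y" for y
    using bij by (simp add: bij_is_surj surj_f_inv_f)
  have "Vector_Spaces.linear sc' sc (inv \<phi>)"
    unfolding Vector_Spaces.linear_iff
    using vs1.vector_space_axioms vs2.vector_space_axioms by (simp add: inv_eq add scale \<phi>_inv)
  then show ?thesis
    using assms bij_imp_bij_inv[OF bij] unfolding iso_inv_alg_def by (simp add: inv_eq \<phi>_inv)
qed

lemma iso_inv_alg_structurable_identity:
  assumes iso: "iso_inv_alg sc m iv sc' m' iv' \<phi>" and "structurable_identity m iv"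
  shows "structurable_identity m' iv'"
proof -
  interpret Vector_Spaces.linear sc sc' \<phi> using iso unfolding iso_inv_alg_def by blast
  have mult: "\<phi> (m x y) = m' (\<phi> x) (\<phi> y)" and inv: "\<phi> (iv x) = iv' (\<phi> x)" for x y
    using iso unfolding iso_inv_alg_def by auto
  have Top: "\<phi> (Top m iv z w) = Top m' iv' (\<phi> z) (\<phi> w)" for z w
    by (simp add: Top_def add diff mult inv)
  have Vop: "\<phi> (Vop m iv x y z) = Vop m' iv' (\<phi> x) (\<phi> y) (\<phi> z)" for x y z
    by (simp add: Vop_def add diff mult inv)
  have "surj \<phi>" using iso unfolding iso_inv_alg_def by (simp add: bij_is_surj)
  show ?thesis
    unfolding structurable_identity_def
  proof (intro allI)
    fix x' y' z' w'
    obtain x y z w where "x' = \<phi> x" "y' = \<phi> y" "z' = \<phi> z" "w' = \<phi> w"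
      using \<open>surj \<phi>\<close> by (metis surjD)
    moreover have "\<phi> (Top m iv z (Vop m iv x y w) - Vop m iv x y (Top m iv z w))
        = \<phi> (Vop m iv (Top m iv z x) y w - Vop m iv x (Top m iv (iv z) y) w)"
      using assms(2) unfolding structurable_identity_def by simp
    ultimately show "Top m' iv' z' (Vop m' iv' x' y' w') - Vop m' iv' x' y' (Top m' iv' z' w')
        = Vop m' iv' (Top m' iv' z' x') y' w' - Vop m' iv' x' (Top m' iv' (iv' z') y') w'"
      by (simp add: Top Vop diff inv)
  qed
qed

lemma (in vector_space) subset_span_singleton_if_dim_eq_1:
  assumes "dim S = 1" and "e \<in> S" and "e \<noteq> 0"
  shows "S \<subseteq> span {e}"
proof -
  obtain B where B: "{e} \<subseteq> B" "B \<subseteq> S" "independent B" "S \<subseteq> span B"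
    using maximal_independent_subset_extend[of "{e}" S] assms(2,3) by auto
  then have "card B = 1" using basis_card_eq_dim assms(1) by metis
  with B(1) have "B = {e}" by (auto simp: card_1_singleton_iff)
  with B(4) show ?thesis by simp
qed

lemma (in vector_space) coefficient_eq_0_if_spanning_triple:
  assumes span: "span {u, v, w} = UNIV" and dim: "dim (UNIV :: 'b set) = 3"
    and comb: "scale a u + scale b v + scale c w = 0"
  shows "a = 0"
proof (rule ccontr)
  assume "a \<noteq> 0"
  from comb have "scale a u = - (scale b v + scale c w)"
    by (simp only: eq_neg_iff_add_eq_0 add.assoc)
  with \<open>a \<noteq> 0\<close> have "u = scale (inverse a) (- (scale b v + scale c w))"
    by (metis scale_scale scale_one left_inverse)
  then have "u \<in> span {v, w}"
    by (simp only:) (intro span_scale span_neg span_add; simp add: span_base)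
  then have "span {v, w} = UNIV" using span by (simp add: span_redundant)
  then have "dim (UNIV :: 'b set) \<le> card {v, w}" by (intro dim_le_card) auto
  also have "\<dots> \<le> 2" by (simp add: card_insert_le_m1)
  finally show False using dim by simp
qed

lemma vector_space_sc3: "vector_space sc3"
  unfolding vector_space_def sc3_def by (auto simp: algebra_simps)

text \<open>The product in coordinates with respect to a basis e, s, t with unit e and
  s s = a e, t t = c e, s t = b e + p s + q t, t s = b e - p s - q t.\<close>

definition mult_type12 :: "complex \<Rightarrow> complex \<Rightarrow> complex \<Rightarrow> complex \<Rightarrow> complex \<Rightarrow>
    complex \<times> complex \<times> complex \<Rightarrow> complex \<times> complex \<times> complex \<Rightarrow> complex \<times> complex \<times> complex" where
  "mult_type12 a b c p q x y = (case x of (x1, x2, x3) \<Rightarrow> case y of (y1, y2, y3) \<Rightarrow>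
     (x1 * y1 + a * x2 * y2 + c * x3 * y3 + b * (x2 * y3 + x3 * y2),
      x1 * y2 + x2 * y1 + p * (x2 * y3 - x3 * y2),
      x1 * y3 + x3 * y1 + q * (x2 * y3 - x3 * y2)))"

lemma mult_type12_zero: "mult_type12 0 0 0 0 0 = multS1"
  by (auto simp: fun_eq_iff mult_type12_def multS1_def)

lemma structurable_identity_mult_type12D:
  assumes "structurable_identity (mult_type12 a b c p q) invS"
  shows "a = q\<^sup>2" "b = - p * q" "c = p\<^sup>2"
proof -
  let ?T = "Top (mult_type12 a b c p q) invS" and ?V = "Vop (mult_type12 a b c p q) invS"
  have "?T z (?V x y w) - ?V x y (?T z w) = ?V (?T z x) y w - ?V x (?T (invS z) y) w" for x y z w
    using assms unfolding structurable_identity_def by blast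
  from this[where x = "(1, 0, 0)" and y = "(0, 1, 0)" and z = "(0, 0, 1)" and w = "(0, 1, 0)"]
       this[where x = "(1, 0, 0)" and y = "(0, 1, 0)" and z = "(0, 0, 1)" and w = "(0, 0, 1)"]
  have "6 * (b + p * q) = 0" "6 * (a - q * q) = 0" "6 * (c - p * p) = 0"
    by (simp_all add: Top_def Vop_def mult_type12_def invS_def zero_prod_def algebra_simps)
  then have "b + p * q = 0" "a = q * q" "c = p * p"
    by (simp_all only: mult_eq_0_iff right_minus_eq) simp_all
  then show "a = q\<^sup>2" "b = - p * q" "c = p\<^sup>2"
    by (simp_all add: power2_eq_square eq_neg_iff_add_eq_0)
qed

lemma iso_mult_type12_multS2:
  assumes "p \<noteq> 0 \<or> q \<noteq> 0"
  obtains \<phi> where "iso_inv_alg sc3 (mult_type12 (q\<^sup>2) (- p * q) (p\<^sup>2) p q) invS sc3 multS2 invS \<phi>"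
proof -
  obtain \<alpha> \<beta> :: complex where det: "p * \<beta> - q * \<alpha> = 1"
  proof (cases "p = 0")
    case True
    with assms have "p * 0 - q * (- 1 / q) = 1" by simp
    then show ?thesis by (rule that)
  next
    case False
    then have "p * (1 / p) - q * 0 = 1" by simp
    then show ?thesis by (rule that)
  qed
  \<comment> \<open>coordinates with respect to the basis e, p s + q t, \<alpha> s + \<beta> t\<close>
  define \<phi> where "\<phi> = (\<lambda>(x1 :: complex, x2, x3). (x1, \<beta> * x2 - \<alpha> * x3, - q * x2 + p * x3))"
  define \<psi> where "\<psi> = (\<lambda>(x1 :: complex, x2, x3). (x1, p * x2 + \<alpha> * x3, q * x2 + \<beta> * x3))"
  have "Vector_Spaces.linear sc3 sc3 \<phi>"
    unfolding Vector_Spaces.linear_iff using vector_space_sc3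
    by (auto simp: \<phi>_def sc3_def algebra_simps)
  moreover have "bij \<phi>"
  proof (rule o_bij)
    show "\<phi> \<circ> \<psi> = id" "\<psi> \<circ> \<phi> = id"
      using det by (auto simp: \<phi>_def \<psi>_def fun_eq_iff) algebra+
  qed
  moreover have "\<phi> (mult_type12 (q\<^sup>2) (- p * q) (p\<^sup>2) p q x y) = multS2 (\<phi> x) (\<phi> y)" for x y
  proof -
    obtain x1 x2 x3 y1 y2 y3 where "x = (x1, x2, x3)" "y = (y1, y2, y3)"
      by (metis prod_cases3)
    then show ?thesis
      by (simp add: \<phi>_def mult_type12_def multS2_def algebra_simps power2_eq_square)
  qed
  moreover have "\<phi> (invS x) = invS (\<phi> x)" for x
    by (cases x) (simp add: \<phi>_def invS_def)
  ultimately show ?thesis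
    by (intro that[of \<phi>]) (simp add: iso_inv_alg_def)
qed

locale complex_algebra_with_involution =
  fixes sc :: "complex \<Rightarrow> 'a::ab_group_add \<Rightarrow> 'a"
    and m :: "'a \<Rightarrow> 'a \<Rightarrow> 'a"
    and iv :: "'a \<Rightarrow> 'a"
  assumes complex_algebra: "complex_algebra sc m"
    and involution: "is_involution sc m iv"
begin

sublocale vector_space sc
  using complex_algebra unfolding complex_algebra_def by blast

sublocale iv: Vector_Spaces.linear sc sc iv
  using involution unfolding is_involution_def by blast

lemma iv_iv [simp]: "iv (iv x) = x"
  and iv_mult: "iv (m x y) = m (iv y) (iv x)"
  using involution unfolding is_involution_def by auto

lemma mult_left_linear:
  "m (x + y) z = m x z + m y z" "m (sc k x) z = sc k (m x z)" "m (- x) z = - m x z"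
proof -
  interpret left: Vector_Spaces.linear sc sc "\<lambda>x. m x z"
    using complex_algebra unfolding complex_algebra_def by blast
  show "m (x + y) z = m x z + m y z" "m (sc k x) z = sc k (m x z)" "m (- x) z = - m x z"
    by (simp_all add: left.add left.scale left.neg)
qed

lemma mult_right_linear:
  "m x (y + z) = m x y + m x z" "m x (sc k y) = sc k (m x y)" "m x (- y) = - m x y"
proof -
  interpret right: Vector_Spaces.linear sc sc "m x"
    using complex_algebra unfolding complex_algebra_def by blast
  show "m x (y + z) = m x y + m x z" "m x (sc k y) = sc k (m x y)" "m x (- y) = - m x y"
    by (simp_all add: right.add right.scale right.neg)
qed

lemma unit_symmetric:
  assumes "\<And>x. m x e = x"
  shows "iv e = e"
proof -
  have "e = iv (m (iv e) e)" by (simp add: assms)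
  also have "\<dots> = iv e" by (subst iv_mult) (simp add: assms)
  finally show ?thesis by (rule sym)
qed

lemma symmetric_in_span_unit:
  assumes "of_type sc iv 1 2" and "iv e = e" and "e \<noteq> 0" and "iv x = x"
  shows "x \<in> span {e}"
  using subset_span_singleton_if_dim_eq_1[of "{x. iv x = x}" e] assms
  unfolding of_type_def by auto

lemma type12_skew_spanning:
  assumes type: "of_type sc iv 1 2" and e: "iv e = e" "e \<noteq> 0"
  obtains s t where "iv s = - s" and "iv t = - t" and "span {e, s, t} = UNIV"
proof -
  have x_in_span: "x \<in> span {e, x - iv x}" for x
  proof -
    have "x + iv x \<in> span {e}"
      using symmetric_in_span_unit[OF type e] by (simp add: iv.add add.commute)
    then have "x + iv x \<in> span {e, x - iv x}"
      using span_mono[of "{e}" "{e, x - iv x}"] by auto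
    moreover have "x - iv x \<in> span {e, x - iv x}" by (simp add: span_base)
    ultimately have "sc (1/2) (x - iv x) + sc (1/2) (x + iv x) \<in> span {e, x - iv x}"
      by (blast intro: span_add span_scale)
    moreover have "sc (1/2) (x - iv x) + sc (1/2) (x + iv x) = x"
    proof -
      have "x + x = sc 2 x" using scale_left_distrib[of 1 1 x] by simp
      then show ?thesis by (simp flip: scale_right_distrib)
    qed
    ultimately show ?thesis by simp
  qed
  have "independent {e}" using e(2) by simp
  then obtain B where B: "{e} \<subseteq> B" "independent B" "UNIV \<subseteq> span B"
    using maximal_independent_subset_extend[OF subset_UNIV] by metis
  have "card B = 3"
    using basis_card_eq_dim[of B UNIV] B type unfolding of_type_def by auto
  with B(1) have "card (B - {e}) = 2" by (simp add: card_Diff_singleton_if)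
  then obtain b1 b2 where "B - {e} = {b1, b2}" by (meson card_2_iff)
  with B(1) have B_eq: "B = {e, b1, b2}" by auto
  define s t where "s = b1 - iv b1" and "t = b2 - iv b2"
  have "B \<subseteq> span {e, s, t}"
    using x_in_span[of b1] x_in_span[of b2] span_mono[of "{e, s}" "{e, s, t}"]
      span_mono[of "{e, t}" "{e, s, t}"]
    unfolding B_eq s_def t_def by (auto intro: span_base)
  then have "span {e, s, t} = UNIV"
    using B(3) span_minimal[of B "span {e, s, t}"] by auto
  moreover have "iv s = - s" "iv t = - t"
    unfolding s_def t_def by (simp_all add: iv.diff)
  ultimately show ?thesis by (rule that[rotated -1])
qed

definition lin_comb3 :: "'a \<Rightarrow> 'a \<Rightarrow> 'a \<Rightarrow> complex \<times> complex \<times> complex \<Rightarrow> 'a" where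
  "lin_comb3 u v w = (\<lambda>(a, b, c). sc a u + sc b v + sc c w)"

lemma lin_comb3_apply [simp]: "lin_comb3 u v w (a, b, c) = sc a u + sc b v + sc c w"
  by (simp add: lin_comb3_def)

lemma linear_lin_comb3: "Vector_Spaces.linear sc3 sc (lin_comb3 u v w)"
  unfolding Vector_Spaces.linear_iff
  using vector_space_sc3 vector_space_axioms
  by (auto simp: sc3_def scale_left_distrib scale_right_distrib algebra_simps)

lemma bij_lin_comb3:
  assumes span: "span {u, v, w} = UNIV" and dim: "dim (UNIV :: 'a set) = 3"
  shows "bij (lin_comb3 u v w)"
proof (rule bijI)
  interpret Vector_Spaces.linear sc3 sc "lin_comb3 u v w" by (rule linear_lin_comb3)
  show "inj (lin_comb3 u v w)"
  proof (rule inj_iff_eq_0[THEN iffD2], intro allI impI)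
    fix x :: "complex \<times> complex \<times> complex"
    obtain a b c where x: "x = (a, b, c)" by (metis prod_cases3)
    assume "lin_comb3 u v w x = 0"
    then have "sc a u + sc b v + sc c w = 0" "sc b v + sc a u + sc c w = 0"
      "sc c w + sc a u + sc b v = 0"
      by (simp_all add: x algebra_simps)
    moreover have "span {v, u, w} = UNIV" "span {w, u, v} = UNIV"
      using span by (simp_all add: insert_commute)
    ultimately show "x = 0"
      using coefficient_eq_0_if_spanning_triple span dim by (simp add: x zero_prod_def)
  qed
  have "y \<in> range (lin_comb3 u v w)" for y
  proof -
    have "y \<in> span {u, v, w}" using span by simp
    then obtain a b c where "y - sc a u - sc b v - sc c w \<in> span {}"
      by (auto simp: span_breakdown_eq)
    then have "y = lin_comb3 u v w (a, b, c)" by (simp add: algebra_simps)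
    then show ?thesis by blast
  qed
  then show "surj (lin_comb3 u v w)" by blast
qed

lemma iv_lin_comb3:
  assumes "iv e = e" and "iv s = - s" and "iv t = - t"
  shows "iv (lin_comb3 e s t x) = lin_comb3 e s t (invS x)"
  using assms by (cases x) (simp add: invS_def iv.add iv.scale iv.neg)

lemma mult_lin_comb3:
  assumes unit: "\<And>x. m e x = x" "\<And>x. m x e = x"
    and ss: "m s s = sc a e" and tt: "m t t = sc c e"
    and st: "m s t = lin_comb3 e s t (b, p, q)" and ts: "m t s = lin_comb3 e s t (b, - p, - q)"
  shows "m (lin_comb3 e s t x) (lin_comb3 e s t y) = lin_comb3 e s t (mult_type12 a b c p q x y)"
proof -
  interpret \<psi>: Vector_Spaces.linear sc3 sc "lin_comb3 e s t" by (rule linear_lin_comb3)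
  let ?\<psi> = "lin_comb3 e s t"
  obtain x1 x2 x3 y1 y2 y3 where x: "x = (x1, x2, x3)" and y: "y = (y1, y2, y3)"
    by (metis prod_cases3)
  have xs: "m (?\<psi> x) s = ?\<psi> (sc3 x1 (0, 1, 0) + sc3 x2 (a, 0, 0) + sc3 x3 (b, - p, - q))"
    by (simp add: x mult_left_linear unit ss ts \<psi>.add \<psi>.scale)
  have xt: "m (?\<psi> x) t = ?\<psi> (sc3 x1 (0, 0, 1) + sc3 x2 (b, p, q) + sc3 x3 (c, 0, 0))"
    by (simp add: x mult_left_linear unit st tt \<psi>.add \<psi>.scale)
  have "m (?\<psi> x) (?\<psi> y) = sc y1 (?\<psi> x) + sc y2 (m (?\<psi> x) s) + sc y3 (m (?\<psi> x) t)"
    by (simp add: y mult_right_linear unit)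
  also have "\<dots> = ?\<psi> (sc3 y1 x
      + sc3 y2 (sc3 x1 (0, 1, 0) + sc3 x2 (a, 0, 0) + sc3 x3 (b, - p, - q))
      + sc3 y3 (sc3 x1 (0, 0, 1) + sc3 x2 (b, p, q) + sc3 x3 (c, 0, 0)))"
    by (simp only: xs xt \<psi>.add \<psi>.scale)
  also have "\<dots> = ?\<psi> (mult_type12 a b c p q x y)"
    by (simp add: x y sc3_def mult_type12_def algebra_simps)
  finally show ?thesis .
qed

lemma type12_iso_mult_type12:
  assumes type: "of_type sc iv 1 2" and unit: "\<And>x. m e x = x" "\<And>x. m x e = x"
  obtains a b c p q \<phi> where "iso_inv_alg sc m iv sc3 (mult_type12 a b c p q) invS \<phi>"
proof -
  have dim: "dim (UNIV :: 'a set) = 3" using type unfolding of_type_def by simp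
  have "e \<noteq> 0"
  proof
    assume "e = 0"
    then have "UNIV \<subseteq> span {}" using unit(1) mult_left_linear(2)[of 0 e] by auto
    then show False using dim_le_card[of UNIV "{}"] dim by simp
  qed
  moreover have e: "iv e = e" using unit(2) by (rule unit_symmetric)
  ultimately obtain s t where s: "iv s = - s" and t: "iv t = - t" and span: "span {e, s, t} = UNIV"
    using type12_skew_spanning type by metis
  let ?\<psi> = "lin_comb3 e s t"
  have bij: "bij ?\<psi>" using span dim by (rule bij_lin_comb3)
  have iv_\<psi>: "iv (?\<psi> x) = ?\<psi> (invS x)" for x using e s t by (rule iv_lin_comb3)
  have "iv (m s s) = m s s" "iv (m t t) = m t t"
    by (simp_all add: iv_mult s t mult_left_linear mult_right_linear)
  then obtain a c where ss: "m s s = sc a e" and tt: "m t t = sc c e"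
    using symmetric_in_span_unit[OF type e \<open>e \<noteq> 0\<close>] by (metis span_singleton rangeE)
  obtain b p q where st: "m s t = ?\<psi> (b, p, q)"
    using bij by (metis bij_pointE prod_cases3)
  have "m t s = iv (m s t)" by (simp add: iv_mult s t mult_left_linear mult_right_linear)
  also have "\<dots> = ?\<psi> (b, - p, - q)" by (simp only: st iv_\<psi>) (simp add: invS_def)
  finally have ts: "m t s = ?\<psi> (b, - p, - q)" .
  have "iso_inv_alg sc3 (mult_type12 a b c p q) invS sc m iv ?\<psi>"
    unfolding iso_inv_alg_def
    using linear_lin_comb3 bij mult_lin_comb3[OF unit ss tt st ts] iv_\<psi> by simp
  then show ?thesis by (intro that) (rule iso_inv_alg_inv)
qed

end

theorem mainTheorem2:
  fixes sc :: "complex \<Rightarrow> 'a::ab_group_add \<Rightarrow> 'a"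
    and m :: "'a \<Rightarrow> 'a \<Rightarrow> 'a"
    and iv :: "'a \<Rightarrow> 'a"
  assumes "structurable sc m iv"
    and "of_type sc iv 1 2"
  shows "(\<exists>\<phi>. iso_inv_alg sc m iv sc3 multS1 invS \<phi>) \<or>
         (\<exists>\<phi>. iso_inv_alg sc m iv sc3 multS2 invS \<phi>)"
proof -
  interpret complex_algebra_with_involution sc m iv
    using assms(1) unfolding structurable_def by unfold_locales auto
  obtain e where unit: "\<And>x. m e x = x" "\<And>x. m x e = x"
    using assms(1) unfolding structurable_def is_unital_def by blast
  obtain a b c p q \<phi> where iso: "iso_inv_alg sc m iv sc3 (mult_type12 a b c p q) invS \<phi>"
    using type12_iso_mult_type12[OF assms(2) unit] .
  have "structurable_identity (mult_type12 a b c p q) invS"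
    using iso_inv_alg_structurable_identity[OF iso] assms(1) by (simp add: structurable_iff)
  then have abc: "a = q\<^sup>2" "b = - p * q" "c = p\<^sup>2"
    by (rule structurable_identity_mult_type12D)+
  show ?thesis
  proof (cases "p = 0 \<and> q = 0")
    case True
    then show ?thesis using iso abc by (auto simp: mult_type12_zero)
  next
    case False
    then obtain \<psi> where "iso_inv_alg sc3 (mult_type12 a b c p q) invS sc3 multS2 invS \<psi>"
      using iso_mult_type12_multS2 abc by blast
    then show ?thesis using iso_inv_alg_comp[OF iso] by blast
  qed
qed

end
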